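(* Let $(e_i)_{i\in\omega}$ be a sequence of events with $<_0$, $\mathrm{Add},\mathrm{Rem},\mathrm{Cnt}$, $\mathrm{val}$, $\chi$ as in the context. Then: (1) If there is a sequence of finite sets $(D_i)_{i\in\omega}$, $D_i\subseteq\mathbb N$, witnessing the state-based specification, then there is a function $\gamma$ on the $\mathrm{Op}^1$ events of the sequence satisfying FS0, FS1 and FS2. (2) If there is a function $\gamma$ on the $\mathrm{Op}^1$ events of the sequence satisfying FS0, FS1 and FS2, then there is a sequence of finite sets $(D_i)_{i\in\omega}$, $D_i\subseteq\mathbb N$, with $D_0=\emptyset$ such that every triple $(D_i,e_i,D_{i+1})$ is correct in the sense of the table in the context.
   Context: Setting: an infinite sequence of events $(e_i)_{i\in\omega}$, linearly ordered by $<_0$ where $e_i<_0e_j$ iff $i<j$. Three unary predicates $\mathrm{Add},\mathrm{Rem},\mathrm{Cnt}$ partition the events. Each event $a$ has a key $\mathrm{val}(a)\in\mathbb N$ and a status $\chi(a)\in\{0,1,f\}$, with $\chi(a)\in\{0,1\}$ whenever $\mathrm{Cnt}(a)$. Notation: for $p\in\{0,1,f\}$, $\mathrm{Add}^p(a)$ abbreviates $\mathrm{Add}(a)\wedge\chi(a)=p$, and $\mathrm{Rem}^p(a)$ similarly; $\mathrm{Cnt}^p$ similarly for $p\in\{0,1\}$; for $p\in\{0,1\}$, $\mathrm{Op}^p(a)$ abbreviates $(\mathrm{Add}(a)\vee\mathrm{Rem}(a)\vee\mathrm{Cnt}(a))\wedge\chi(a)=p$. State-based specification: a sequence $(D_i)_{i\in\omega}$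 of finite subsets of $\mathbb N$ witnesses it if $D_0=\emptyset$ and for every $i$ the triple $(D,a,D')=(D_i,e_i,D_{i+1})$, with $x=\mathrm{val}(a)$, is correct, meaning: if $\chi(a)=f$ then $D'=D$; if $\mathrm{Add}^0(a)$ then $x\notin D$ and $D'=D\cup\{x\}$; if $\mathrm{Add}^1(a)$ then $x\in D$ and $D'=D$; if $\mathrm{Rem}^0(a)$ then $x\notin D$ and $D'=D$; if $\mathrm{Rem}^1(a)$ then $x\in D$ and $D'=D\setminus\{x\}$; if $\mathrm{Cnt}^0(a)$ then $x\notin D$ and $D'=D$; if $\mathrm{Cnt}^1(a)$ then $x\in D$ and $D'=D$. Functional specification (properties of a function $\gamma$): FS0: $<_0$ is a linear ordering of the events; $\mathrm{Add},\mathrm{Rem},\mathrm{Cnt}$ are pairwise disjoint; $\gamma$ is defined on the set of $\mathrm{Op}^1$ events and its values are $\mathrm{Add}^0$ events. FS1: for every event $a$ with $\mathrm{Op}^1(a)$: $\gamma(a)<_0 a$, $\mathrm{Add}^0(\gamma(a))$, $\mathrm{val}(a)=\mathrm{val}(\gamma(a))$, and there is no event $r$ with $\mathrm{Rem}^1(r)$, $\gamma(r)=\gamma(a)$ and $\gamma(a)<_0 r<_0 a$. FS2: for all events $a<_0 b$ with $\mathrm{Add}^0(a)$ and $\mathrm{Op}^0(b)$: if $\mathrm{val}(a)=\mathrm{val}(b)$ then there is an event $r$ with $a<_0 r<_0 b$, $\mathrm{Rem}^1(r)$ and $a=\gamma(r)$. *)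

theory Defs
  imports Main
begin

(* Events are identified with their indices i :: nat (event e_i);
   the order <_0 is then the usual < on nat. *)

datatype status = S0 | S1 | Sf

type_synonym pred = "nat \<Rightarrow> bool"

definition Op :: "pred \<Rightarrow> pred \<Rightarrow> pred \<Rightarrow> (nat \<Rightarrow> status) \<Rightarrow> status \<Rightarrow> nat \<Rightarrow> bool" where
  "Op Add Rem Cnt chi p a \<longleftrightarrow> (Add a \<or> Rem a \<or> Cnt a) \<and> chi a = p"

definition correct ::
  "pred \<Rightarrow> pred \<Rightarrow> pred \<Rightarrow> (nat \<Rightarrow> nat) \<Rightarrow> (nat \<Rightarrow> status) \<Rightarrow> nat set \<Rightarrow> nat \<Rightarrow> nat set \<Rightarrow> bool" where
  "correct Add Rem Cnt val chi D a D' \<longleftrightarrow>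
     (let x = val a in
       (chi a = Sf \<longrightarrow> D' = D) \<and>
       (Add a \<and> chi a = S0 \<longrightarrow> x \<notin> D \<and> D' = D \<union> {x}) \<and>
       (Add a \<and> chi a = S1 \<longrightarrow> x \<in> D \<and> D' = D) \<and>
       (Rem a \<and> chi a = S0 \<longrightarrow> x \<notin> D \<and> D' = D) \<and>
       (Rem a \<and> chi a = S1 \<longrightarrow> x \<in> D \<and> D' = D - {x}) \<and>
       (Cnt a \<and> chi a = S0 \<longrightarrow> x \<notin> D \<and> D' = D) \<and>
       (Cnt a \<and> chi a = S1 \<longrightarrow> x \<in> D \<and> D' = D))"

(* FS0: <_0 (= < on nat) is trivially a linear order; disjointness of Add, Rem, Cnt;
   gamma maps Op^1 events to Add^0 events (gamma is a total HOL function; only its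
   values on Op^1 events matter). *)
definition FS0 :: "pred \<Rightarrow> pred \<Rightarrow> pred \<Rightarrow> (nat \<Rightarrow> status) \<Rightarrow> (nat \<Rightarrow> nat) \<Rightarrow> bool" where
  "FS0 Add Rem Cnt chi \<gamma> \<longleftrightarrow>
     (\<forall>a. \<not> (Add a \<and> Rem a) \<and> \<not> (Add a \<and> Cnt a) \<and> \<not> (Rem a \<and> Cnt a)) \<and>
     (\<forall>a. Op Add Rem Cnt chi S1 a \<longrightarrow> Add (\<gamma> a) \<and> chi (\<gamma> a) = S0)"

definition FS1 :: "pred \<Rightarrow> pred \<Rightarrow> pred \<Rightarrow> (nat \<Rightarrow> nat) \<Rightarrow> (nat \<Rightarrow> status) \<Rightarrow> (nat \<Rightarrow> nat) \<Rightarrow> bool" where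
  "FS1 Add Rem Cnt val chi \<gamma> \<longleftrightarrow>
     (\<forall>a. Op Add Rem Cnt chi S1 a \<longrightarrow>
        \<gamma> a < a \<and> Add (\<gamma> a) \<and> chi (\<gamma> a) = S0 \<and> val a = val (\<gamma> a) \<and>
        \<not> (\<exists>r. Rem r \<and> chi r = S1 \<and> \<gamma> r = \<gamma> a \<and> \<gamma> a < r \<and> r < a))"

definition FS2 :: "pred \<Rightarrow> pred \<Rightarrow> pred \<Rightarrow> (nat \<Rightarrow> nat) \<Rightarrow> (nat \<Rightarrow> status) \<Rightarrow> (nat \<Rightarrow> nat) \<Rightarrow> bool" where
  "FS2 Add Rem Cnt val chi \<gamma> \<longleftrightarrow>
     (\<forall>a b. a < b \<and> Add a \<and> chi a = S0 \<and> Op Add Rem Cnt chi S0 b \<longrightarrow>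
        val a = val b \<longrightarrow>
        (\<exists>r. a < r \<and> r < b \<and> Rem r \<and> chi r = S1 \<and> a = \<gamma> r))"

end

theory Submission
  imports Defs
begin

(* Both specifications are equivalent to one condition on the canonical state sequence, obtained
   from the empty set by performing every successful add (Add^0) and successful remove (Rem^1):
   the status of each operation agrees with the membership of its key in the current state.
   For the state-based specification this holds because a correct triple determines the next
   state. For the functional one, note that x lies in the state before event i iff some Add^0 of
   x before i is "live", i.e. not followed by a Rem^1 of x before i. Given agreement,
   gamma a := the last Add^0 of val a before a satisfies FS1 and FS2; conversely FS1 and FS2 force
   gamma a to be the last such add and leave no Rem^1 of val a between gamma a and a, so
   gamma a is live at a. *)

lemma FS0_if_FS1:
  assumes "\<And>a. \<not> (Add a \<and> Rem a) \<and> \<not> (Add a \<and> Cnt a) \<and> \<not> (Rem a \<and> Cnt a)"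
    and "FS1 Add Rem Cnt val chi \<gamma>"
  shows "FS0 Add Rem Cnt chi \<gamma>"
  using assms unfolding FS0_def FS1_def by blast

locale event_sequence =
  fixes Add Rem Cnt :: "nat \<Rightarrow> bool" and val :: "nat \<Rightarrow> nat" and chi :: "nat \<Rightarrow> status"
begin

abbreviation add0 :: "nat \<Rightarrow> bool" where "add0 a \<equiv> Add a \<and> chi a = S0"
abbreviation rem1 :: "nat \<Rightarrow> bool" where "rem1 a \<equiv> Rem a \<and> chi a = S1"

lemma Op_S0_if_add0: "add0 a \<Longrightarrow> Op Add Rem Cnt chi S0 a"
  unfolding Op_def by simp

lemma Op_S1_if_rem1: "rem1 a \<Longrightarrow> Op Add Rem Cnt chi S1 a"
  unfolding Op_def by simp

definition next_state :: "nat set \<Rightarrow> nat \<Rightarrow> nat set" where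
  "next_state D a =
     (if add0 a then insert (val a) D else if rem1 a then D - {val a} else D)"

primrec state :: "nat \<Rightarrow> nat set" where
  "state 0 = {}"
| "state (Suc i) = next_state (state i) i"

definition responses_consistent :: bool where
  "responses_consistent \<longleftrightarrow>
     (\<forall>a. (Op Add Rem Cnt chi S1 a \<longrightarrow> val a \<in> state a) \<and>
          (Op Add Rem Cnt chi S0 a \<longrightarrow> val a \<notin> state a))"

lemma finite_state: "finite (state i)"
  by (induction i) (simp_all add: next_state_def)

lemma correct_iff_next_state:
  assumes "Add a \<or> Rem a \<or> Cnt a"
    and "\<not> (Add a \<and> Rem a)" "\<not> (Add a \<and> Cnt a)" "\<not> (Rem a \<and> Cnt a)"
  shows "correct Add Rem Cnt val chi D a D' \<longleftrightarrow>
           D' = next_state D a \<and>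
           (Op Add Rem Cnt chi S1 a \<longrightarrow> val a \<in> D) \<and>
           (Op Add Rem Cnt chi S0 a \<longrightarrow> val a \<notin> D)"
  using assms unfolding correct_def next_state_def Op_def Let_def
  by (cases "chi a") auto

lemma state_spec_iff:
  assumes "\<And>a. (Add a \<or> Rem a \<or> Cnt a) \<and> \<not> (Add a \<and> Rem a)
                 \<and> \<not> (Add a \<and> Cnt a) \<and> \<not> (Rem a \<and> Cnt a)"
  shows "D 0 = {} \<and> (\<forall>i. correct Add Rem Cnt val chi (D i) i (D (Suc i))) \<longleftrightarrow>
           D = state \<and> responses_consistent"
proof -
  have correct_iff: "correct Add Rem Cnt val chi (D i) i (D (Suc i)) \<longleftrightarrow>
      D (Suc i) = next_state (D i) i \<and>
      (Op Add Rem Cnt chi S1 i \<longrightarrow> val i \<in> D i) \<and> (Op Add Rem Cnt chi S0 i \<longrightarrow> val i \<notin> D i)"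
    for i using assms[of i] by (intro correct_iff_next_state) auto
  show ?thesis
  proof
    assume spec: "D 0 = {} \<and> (\<forall>i. correct Add Rem Cnt val chi (D i) i (D (Suc i)))"
    then have "D 0 = {}" and step: "\<And>i. D (Suc i) = next_state (D i) i"
      using correct_iff by auto
    have "D i = state i" for i
      by (induction i) (simp_all add: \<open>D 0 = {}\<close> step)
    then have "D = state" ..
    then show "D = state \<and> responses_consistent"
      using spec correct_iff unfolding responses_consistent_def by auto
  next
    assume "D = state \<and> responses_consistent"
    then show "D 0 = {} \<and> (\<forall>i. correct Add Rem Cnt val chi (D i) i (D (Suc i)))"
      unfolding correct_iff responses_consistent_def by simp
  qed
qed

definition live_add :: "nat \<Rightarrow> nat \<Rightarrow> bool" where
  "live_add i j \<longleftrightarrow> j < i \<and> add0 j \<and> (\<forall>r. j < r \<and> r < i \<longrightarrow> \<not> (rem1 r \<and> val r = val j))"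

lemma live_add_Suc:
  "live_add (Suc i) j \<longleftrightarrow>
     (live_add i j \<and> \<not> (rem1 i \<and> val i = val j)) \<or> (j = i \<and> add0 i)"
  unfolding live_add_def by (auto simp: less_Suc_eq)

lemma mem_state_iff_live_add: "x \<in> state i \<longleftrightarrow> (\<exists>j. live_add i j \<and> val j = x)"
proof (induction i)
  case 0
  then show ?case by (simp add: live_add_def)
next
  case (Suc i)
  then show ?case
    unfolding state.simps next_state_def live_add_Suc by auto
qed

definition last_add :: "nat \<Rightarrow> nat" where
  "last_add a = (GREATEST j. j < a \<and> add0 j \<and> val j = val a)"

context
  assumes consistent: responses_consistent
begin

lemma live_add_is_last:
  assumes "live_add i j" "add0 g" "val g = val j" "g < i"
  shows "g \<le> j"
proof (rule ccontr)
  assume "\<not> g \<le> j"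
  then have "live_add g j"
    using assms(1,4) unfolding live_add_def by auto
  then have "val g \<in> state g"
    unfolding mem_state_iff_live_add using assms(3) by auto
  moreover have "Op Add Rem Cnt chi S0 g"
    using assms(2) by (rule Op_S0_if_add0)
  ultimately show False
    using consistent unfolding responses_consistent_def by blast
qed

lemma last_add_eqI:
  assumes "live_add a j" "val j = val a"
  shows "last_add a = j"
  unfolding last_add_def
proof (rule Greatest_equality)
  show "j < a \<and> add0 j \<and> val j = val a"
    using assms unfolding live_add_def by simp
  show "g \<le> j" if "g < a \<and> add0 g \<and> val g = val a" for g
    by (rule live_add_is_last[OF assms(1)]) (use that assms(2) in simp_all)
qed

lemma live_last_add:
  assumes "Op Add Rem Cnt chi S1 a"
  shows "live_add a (last_add a)" "val (last_add a) = val a"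
proof -
  have "val a \<in> state a"
    using assms consistent unfolding responses_consistent_def by blast
  then obtain j where j: "live_add a j" "val j = val a"
    unfolding mem_state_iff_live_add by blast
  then have "last_add a = j"
    by (rule last_add_eqI)
  with j show "live_add a (last_add a)" "val (last_add a) = val a"
    by simp_all
qed

lemma FS1_last_add: "FS1 Add Rem Cnt val chi last_add"
  unfolding FS1_def
proof (intro allI impI)
  fix a
  assume a: "Op Add Rem Cnt chi S1 a"
  note live = live_last_add[OF a]
  have "\<not> (\<exists>r. Rem r \<and> chi r = S1 \<and> last_add r = last_add a \<and> last_add a < r \<and> r < a)"
  proof
    assume "\<exists>r. Rem r \<and> chi r = S1 \<and> last_add r = last_add a \<and> last_add a < r \<and> r < a"
    then obtain r where r: "rem1 r" "last_add r = last_add a" "last_add a < r" "r < a"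
      by blast
    then have "val r = val a"
      using live_last_add(2)[of r] live(2) unfolding Op_def by simp
    then show False
      using live r unfolding live_add_def by auto
  qed
  then show "last_add a < a \<and> Add (last_add a) \<and> chi (last_add a) = S0 \<and>
      val a = val (last_add a) \<and>
      \<not> (\<exists>r. Rem r \<and> chi r = S1 \<and> last_add r = last_add a \<and> last_add a < r \<and> r < a)"
    using live unfolding live_add_def by auto
qed

lemma FS2_last_add: "FS2 Add Rem Cnt val chi last_add"
  unfolding FS2_def
proof (intro allI impI)
  fix a b
  assume ab: "a < b \<and> Add a \<and> chi a = S0 \<and> Op Add Rem Cnt chi S0 b" and val_eq: "val a = val b"
  have "val b \<notin> state b"
    using ab consistent unfolding responses_consistent_def by blast
  then have "\<not> live_add b a"
    unfolding mem_state_iff_live_add using val_eq by auto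
  then have "\<exists>r. a < r \<and> r < b \<and> rem1 r \<and> val r = val a" (is "\<exists>r. ?removal r")
    using ab unfolding live_add_def by auto
  then have "\<exists>r. ?removal r \<and> (\<forall>q<r. \<not> ?removal q)"
    by (rule exists_least_iff[THEN iffD1])
  then obtain r where r: "?removal r" and first: "\<forall>q<r. \<not> ?removal q"
    by blast
  have "live_add r a"
    unfolding live_add_def using ab r first by auto
  then have "last_add r = a"
    by (rule last_add_eqI) (use r in simp)
  then show "\<exists>r. a < r \<and> r < b \<and> Rem r \<and> chi r = S1 \<and> a = last_add r"
    using r by auto
qed

end

context
  fixes \<gamma> :: "nat \<Rightarrow> nat"
  assumes FS1: "FS1 Add Rem Cnt val chi \<gamma>" and FS2: "FS2 Add Rem Cnt val chi \<gamma>"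
begin

lemma FS1D:
  assumes "Op Add Rem Cnt chi S1 a"
  shows "\<gamma> a < a" "add0 (\<gamma> a)" "val (\<gamma> a) = val a"
    and "\<And>r. rem1 r \<Longrightarrow> \<gamma> r = \<gamma> a \<Longrightarrow> \<gamma> a < r \<Longrightarrow> r < a \<Longrightarrow> False"
  using mp[OF spec[OF FS1[unfolded FS1_def]] assms] by auto

lemma FS2E:
  assumes "a < b" "add0 a" "Op Add Rem Cnt chi S0 b" "val a = val b"
  obtains r where "a < r" "r < b" "rem1 r" "\<gamma> r = a"
  using FS2 assms unfolding FS2_def by blast

lemma gamma_is_last_add:
  assumes a: "Op Add Rem Cnt chi S1 a" and g: "add0 g" "val g = val a" "g < a"
  shows "g \<le> \<gamma> a"
proof (rule ccontr)
  assume "\<not> g \<le> \<gamma> a"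
  then obtain r where r: "\<gamma> a < r" "r < g" "rem1 r" "\<gamma> r = \<gamma> a"
    using FS2E[of "\<gamma> a" g] FS1D[OF a] g Op_S0_if_add0 by auto
  then show False
    using FS1D(4)[OF a \<open>rem1 r\<close> \<open>\<gamma> r = \<gamma> a\<close> \<open>\<gamma> a < r\<close>] g(3) by simp
qed

text \<open>A remove r of the same key cannot sit between \<open>\<gamma> a\<close> and \<open>a\<close>: its own add
  \<open>\<gamma> r\<close> cannot be \<open>\<gamma> a\<close> by FS1, and it cannot be earlier or later than \<open>\<gamma> a\<close>
  by \<open>gamma_is_last_add\<close> for r resp. for a.\<close>

lemma live_add_gamma:
  assumes a: "Op Add Rem Cnt chi S1 a"
  shows "live_add a (\<gamma> a)"
proof -
  have False if r: "\<gamma> a < r" "r < a" "rem1 r" "val r = val a" for r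
  proof -
    note ga = FS1D[OF a] and gr = FS1D[OF Op_S1_if_rem1[OF \<open>rem1 r\<close>]]
    consider "\<gamma> r = \<gamma> a" | "\<gamma> r < \<gamma> a" | "\<gamma> a < \<gamma> r"
      by linarith
    then show False
    proof cases
      case 1
      then show False using ga(4) r by blast
    next
      case 2
      then show False
        using gamma_is_last_add[OF Op_S1_if_rem1[OF \<open>rem1 r\<close>], of "\<gamma> a"] ga r by simp
    next
      case 3
      then show False
        using gamma_is_last_add[OF a, of "\<gamma> r"] gr r by simp
    qed
  qed
  then show ?thesis
    using FS1D[OF a] unfolding live_add_def by auto
qed

lemma responses_consistent_if_FS1_FS2: responses_consistent
  unfolding responses_consistent_def
proof (intro allI conjI impI notI)
  fix a
  assume a: "Op Add Rem Cnt chi S1 a"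
  show "val a \<in> state a"
    unfolding mem_state_iff_live_add using live_add_gamma[OF a] FS1D(3)[OF a] by blast
next
  fix b
  assume b: "Op Add Rem Cnt chi S0 b" and "val b \<in> state b"
  then obtain j where j: "live_add b j" "val j = val b"
    unfolding mem_state_iff_live_add by blast
  then obtain r where "j < r" "r < b" "rem1 r" "\<gamma> r = j"
    using FS2E[of j b] b unfolding live_add_def by auto
  then show False
    using j FS1D(3)[OF Op_S1_if_rem1] unfolding live_add_def by metis
qed

end

lemma state_spec_iff_responses_consistent:
  assumes "\<And>a. (Add a \<or> Rem a \<or> Cnt a) \<and> \<not> (Add a \<and> Rem a)
                 \<and> \<not> (Add a \<and> Cnt a) \<and> \<not> (Rem a \<and> Cnt a)"
  shows "(\<exists>D. (\<forall>i. finite (D i)) \<and> D 0 = {} \<and>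
            (\<forall>i. correct Add Rem Cnt val chi (D i) i (D (Suc i)))) \<longleftrightarrow> responses_consistent"
    (is "(\<exists>D. _ \<and> ?spec D) \<longleftrightarrow> _")
proof
  assume "\<exists>D. (\<forall>i. finite (D i)) \<and> ?spec D"
  then obtain D where "?spec D"
    by blast
  then show responses_consistent
    unfolding state_spec_iff[OF assms] ..
next
  assume responses_consistent
  then have "?spec state"
    unfolding state_spec_iff[OF assms] by simp
  then show "\<exists>D. (\<forall>i. finite (D i)) \<and> ?spec D"
    using finite_state by blast
qed

lemma functional_spec_iff_responses_consistent:
  assumes "\<And>a. \<not> (Add a \<and> Rem a) \<and> \<not> (Add a \<and> Cnt a) \<and> \<not> (Rem a \<and> Cnt a)"
  shows "(\<exists>\<gamma>. FS0 Add Rem Cnt chi \<gamma> \<and> FS1 Add Rem Cnt val chi \<gamma> \<and>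
            FS2 Add Rem Cnt val chi \<gamma>) \<longleftrightarrow> responses_consistent"
proof
  assume "\<exists>\<gamma>. FS0 Add Rem Cnt chi \<gamma> \<and> FS1 Add Rem Cnt val chi \<gamma> \<and>
    FS2 Add Rem Cnt val chi \<gamma>"
  then obtain \<gamma> where "FS1 Add Rem Cnt val chi \<gamma>" "FS2 Add Rem Cnt val chi \<gamma>"
    by blast
  then show responses_consistent
    by (rule responses_consistent_if_FS1_FS2)
next
  assume consistent: responses_consistent
  show "\<exists>\<gamma>. FS0 Add Rem Cnt chi \<gamma> \<and> FS1 Add Rem Cnt val chi \<gamma> \<and>
    FS2 Add Rem Cnt val chi \<gamma>"
    using FS0_if_FS1[OF assms FS1_last_add[OF consistent]] FS1_last_add[OF consistent]
      FS2_last_add[OF consistent] by blast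
qed

end

theorem theorem2p3:
  fixes Add Rem Cnt :: "nat \<Rightarrow> bool"
    and val :: "nat \<Rightarrow> nat"
    and chi :: "nat \<Rightarrow> status"
  assumes partition: "\<And>a. (Add a \<or> Rem a \<or> Cnt a) \<and> \<not> (Add a \<and> Rem a)
                          \<and> \<not> (Add a \<and> Cnt a) \<and> \<not> (Rem a \<and> Cnt a)"
    and cnt_status: "\<And>a. Cnt a \<Longrightarrow> chi a \<noteq> Sf"
  shows "((\<exists>D :: nat \<Rightarrow> nat set. (\<forall>i. finite (D i)) \<and> D 0 = {} \<and>
              (\<forall>i. correct Add Rem Cnt val chi (D i) i (D (Suc i))))
          \<longrightarrow> (\<exists>\<gamma>. FS0 Add Rem Cnt chi \<gamma> \<and> FS1 Add Rem Cnt val chi \<gamma> \<and> FS2 Add Rem Cnt val chi \<gamma>))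
       \<and> ((\<exists>\<gamma>. FS0 Add Rem Cnt chi \<gamma> \<and> FS1 Add Rem Cnt val chi \<gamma> \<and> FS2 Add Rem Cnt val chi \<gamma>)
          \<longrightarrow> (\<exists>D :: nat \<Rightarrow> nat set. (\<forall>i. finite (D i)) \<and> D 0 = {} \<and>
              (\<forall>i. correct Add Rem Cnt val chi (D i) i (D (Suc i)))))"
proof -
  interpret event_sequence Add Rem Cnt val chi .
  have disjoint: "\<And>a. \<not> (Add a \<and> Rem a) \<and> \<not> (Add a \<and> Cnt a) \<and> \<not> (Rem a \<and> Cnt a)"
    using partition by blast
  show ?thesis
    unfolding state_spec_iff_responses_consistent[OF partition]
      functional_spec_iff_responses_consistent[OF disjoint]
    by simp
qed

end
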